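(* Consider the generalized linear model with design space $\mathcal{X}$ described in the context, and suppose $\mathcal{X}$ is compact, $\nu(\eta)$ is continuous, $q_1,\ldots,q_p$ are continuous with respect to all continuous factors of $\mathbf{x}\in\mathcal{X}$, and there exists $\boldsymbol\xi\in\boldsymbol\Xi(\mathcal{X})$ with $|\mathbf{F}(\boldsymbol\xi)|>0$. Then a design $\boldsymbol\xi_t$ is reported by the ForLion A-optimality algorithm described in the context if and only if $\boldsymbol\xi_t$ is A-optimal among $\boldsymbol\Xi(\mathcal{X})$.
   Context: GLM: a response at covariate $\mathbf{x}\in\mathbb{R}^d$ follows a one-parameter exponential family with mean $\mu$ and $g(\mu)=\mathbf{q}(\mathbf{x})^T\boldsymbol\beta$, with link $g$, predictor functions $\mathbf{q}=(q_1,\ldots,q_p)^T$, fixed $\boldsymbol\beta\in\mathbb{R}^p$, and $\nu(\eta)=[(g^{-1})'(\eta)]^2/\mathrm{Var}(Y)\ge0$. There are $d$ factors, the first $s\ge1$ continuous with ranges $[l_j,r_j]$, the others discrete with finite level sets $I_j$; $\mathcal{X}=\prod_{j=1}^d[l_j,r_j]$ if $s=d$, or $\mathcal{X}=\prod_{j=1}^s[l_j,r_j]\times\mathcal{D}$ with $\mathcal{D}\subseteq\prod_{j=s+1}^dI_j$ if $s<d$. $\mathbf{F}_{\mathbf{x}}=\nu(\mathbf{q}(\mathbf{x})^T\boldsymbol\beta)\mathbf{q}(\mathbf{x})\mathbf{q}(\mathbf{x})^T$; $\boldsymbol\Xi(\mathcal{X})$ is the set of probability measures on $\mathcal{X}$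 with $\mathbf{F}(\boldsymbol\xi)=\int\mathbf{F}_{\mathbf{x}}\boldsymbol\xi(d\mathbf{x})$; $h(\boldsymbol\xi)=[\mathrm{tr}(\mathbf{F}(\boldsymbol\xi)^{-1})]^{-1}$ if $|\mathbf{F}(\boldsymbol\xi)|>0$, else $0$; A-optimal means maximizing $h$ over $\boldsymbol\Xi(\mathcal{X})$. For a finitely supported design $\boldsymbol\xi$, the sensitivity function is $\varphi(\mathbf{x},\boldsymbol\xi)=\nu(\boldsymbol\beta^T\mathbf{q}(\mathbf{x}))\,\mathbf{q}(\mathbf{x})^T\mathbf{F}(\boldsymbol\xi)^{-2}\mathbf{q}(\mathbf{x})$. ForLion A-optimality algorithm: starting from a finitely supported design $\boldsymbol\xi_0$ with $|\mathbf{F}(\boldsymbol\xi_0)|>0$, at each iteration $t$ the current design $\boldsymbol\xi_t$ (finitely supported, with $|\mathbf{F}(\boldsymbol\xi_t)|>0$) is modified by merging nearby support points (only if $\mathbf{F}$ stays nonsingular), re-optimizing the weights on the current support points to an A-optimal allocation (lift-one step), and deleting support points with zero weight; then a point $\mathbf{x}^*\in\arg\max_{\mathbf{x}\in\mathcal{X}}\varphi(\mathbf{x},\boldsymbol\xi_t)$ is found. If $\varphi(\mathbf{x}^*,\boldsymbol\xi_t)\le\mathrm{tr}(\mathbf{F}(\boldsymbol\xi_t)^{-1})$, the algorithm stops and reports $\boldsymbol\xi_t$; otherwise it sets $\boldsymbol\xi_{t+1}=\{(\mathbf{x}_i^{(t)},(1-\alpha_t)w_i^{(t)})\}\cup\{(\mathbf{x}^*,\alpha_t)\}$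 with $\alpha_t\in[0,1]$ maximizing $h(\boldsymbol\xi_{t+1})$ and continues. *)

theory Defs
  imports "HOL-Analysis.Analysis" "HOL-Probability.Probability"
begin

text \<open>The set C of indices
  of continuous factors (nonempty) has ranges [l j, r j]; the remaining (discrete)
  factors j take values in finite level sets I j. The discrete part of x is
  encoded as the vector with continuous coordinates set to 0; D is the set of
  admissible discrete parts.\<close>

definition disc_part :: "'d set \<Rightarrow> real^'d \<Rightarrow> real^'d" where
  "disc_part C x = (\<chi> j. if j \<in> C then 0 else x $ j)"

definition design_space ::
  "'d set \<Rightarrow> ('d \<Rightarrow> real) \<Rightarrow> ('d \<Rightarrow> real) \<Rightarrow> (real^'d) set \<Rightarrow> (real^'d) set" where
  "design_space C l r D =
     (if C = UNIV then {x. \<forall>j. l j \<le> x $ j \<and> x $ j \<le> r j}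
      else {x. (\<forall>j\<in>C. l j \<le> x $ j \<and> x $ j \<le> r j) \<and> disc_part C x \<in> D})"

definition valid_discrete ::
  "'d set \<Rightarrow> ('d \<Rightarrow> real set) \<Rightarrow> (real^'d) set \<Rightarrow> bool" where
  "valid_discrete C I D =
     ((\<forall>j. j \<notin> C \<longrightarrow> finite (I j)) \<and>
      D \<subseteq> {y. \<forall>j. (j \<in> C \<longrightarrow> y $ j = 0) \<and> (j \<notin> C \<longrightarrow> y $ j \<in> I j)})"

definition designs :: "(real^'d) set \<Rightarrow> (real^'d) measure set" where
  "designs X = {M. prob_space M \<and> sets M = sets (restrict_space borel X)}"

definition finsupp_design :: "(real^'d) set \<Rightarrow> (real^'d) measure \<Rightarrow> bool" where
  "finsupp_design X M \<longleftrightarrow> M \<in> designs X \<and>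
     (\<exists>S. finite S \<and> S \<subseteq> X \<and> emeasure M (X - S) = 0)"

definition outer :: "real^'p \<Rightarrow> real^'p^'p" where
  "outer v = (\<chi> i j. v $ i * v $ j)"

definition Fx :: "(real \<Rightarrow> real) \<Rightarrow> (real^'d \<Rightarrow> real^'p) \<Rightarrow> real^'p \<Rightarrow> real^'d \<Rightarrow> real^'p^'p" where
  "Fx nu q beta x = nu (q x \<bullet> beta) *\<^sub>R outer (q x)"

definition FI :: "(real \<Rightarrow> real) \<Rightarrow> (real^'d \<Rightarrow> real^'p) \<Rightarrow> real^'p \<Rightarrow> (real^'d) measure \<Rightarrow> real^'p^'p" where
  "FI nu q beta M = integral\<^sup>L M (Fx nu q beta)"

definition hA :: "(real \<Rightarrow> real) \<Rightarrow> (real^'d \<Rightarrow> real^'p) \<Rightarrow> real^'p \<Rightarrow> (real^'d) measure \<Rightarrow> real" where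
  "hA nu q beta M =
     (if det (FI nu q beta M) > 0 then 1 / trace (matrix_inv (FI nu q beta M)) else 0)"

definition A_optimal ::
  "(real^'d) set \<Rightarrow> (real \<Rightarrow> real) \<Rightarrow> (real^'d \<Rightarrow> real^'p) \<Rightarrow> real^'p \<Rightarrow> (real^'d) measure \<Rightarrow> bool" where
  "A_optimal X nu q beta M \<longleftrightarrow> M \<in> designs X \<and>
     (\<forall>N\<in>designs X. hA nu q beta N \<le> hA nu q beta M)"

definition sens :: "(real \<Rightarrow> real) \<Rightarrow> (real^'d \<Rightarrow> real^'p) \<Rightarrow> real^'p \<Rightarrow> real^'d \<Rightarrow> (real^'d) measure \<Rightarrow> real" where
  "sens nu q beta x M =
     nu (beta \<bullet> q x) *
       (q x \<bullet> ((matrix_inv (FI nu q beta M) ** matrix_inv (FI nu q beta M)) *v q x))"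

text \<open>The ForLion A-optimality algorithm reports the current design xi_t
  (finitely supported, nonsingular) iff, for a maximiser x* of the sensitivity
  function over X, phi(x*, xi_t) <= tr(F(xi_t)^{-1}).\<close>
definition forlion_reports ::
  "(real^'d) set \<Rightarrow> (real \<Rightarrow> real) \<Rightarrow> (real^'d \<Rightarrow> real^'p) \<Rightarrow> real^'p \<Rightarrow> (real^'d) measure \<Rightarrow> bool" where
  "forlion_reports X nu q beta M \<longleftrightarrow>
     (\<exists>xs\<in>X. (\<forall>x\<in>X. sens nu q beta x M \<le> sens nu q beta xs M) \<and>
             sens nu q beta xs M \<le> trace (matrix_inv (FI nu q beta M)))"

end

theory Submission
  imports Defs
begin

(* Write F = F(xi) for the nonsingular design xi. For every nonsingular design eta, expanding
   0 <= tr((F^-1 - F(eta)^-1) F(eta) (F^-1 - F(eta)^-1)) and using that tr(F^-2 F(eta)) is the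
   eta-average of the sensitivity phi(., xi) gives
     tr F(eta)^-1 >= 2 tr F^-1 - integral phi(x, xi) d eta(x),
   so phi <= tr F^-1 on X makes xi A-optimal. Conversely, if phi(x0, xi) > tr F^-1, then by the
   Sherman-Morrison formula moving a small mass alpha to x0 strictly decreases tr F^-1; since xi is
   finitely supported, the mixture is again a design, contradicting optimality. A maximiser x* of
   phi exists because X is compact and phi is continuous on each of the finitely many slices of X
   with fixed discrete factors. *)

section \<open>Inverses of positive semidefinite matrices\<close>

definition symmetric_matrix :: "real^'n^'n \<Rightarrow> bool" where
  "symmetric_matrix A \<longleftrightarrow> Finite_Cartesian_Product.transpose A = A"

definition psd_matrix :: "real^'n^'n \<Rightarrow> bool" where
  "psd_matrix A \<longleftrightarrow> (\<forall>v. 0 \<le> v \<bullet> (A *v v))"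

lemma symmetric_matrix_inner:
  "symmetric_matrix A \<Longrightarrow> v \<bullet> (A *v w) = w \<bullet> (A *v v)"
  unfolding symmetric_matrix_def
  by (metis dot_lmul_matrix inner_commute vector_transpose_matrix)

lemma matrix_diff_ldistrib: "(A::real^'n^'n) ** (B - C) = A ** B - A ** C"
  by (simp add: matrix_matrix_mult_def vec_eq_iff algebra_simps sum_subtractf)

lemma matrix_diff_rdistrib: "((A::real^'n^'n) - B) ** C = A ** C - B ** C"
  by (simp add: matrix_matrix_mult_def vec_eq_iff algebra_simps sum_subtractf)

lemma matrix_add_rdistrib: "((A::real^'n^'n) + B) ** C = A ** C + B ** C"
  by (simp add: matrix_matrix_mult_def vec_eq_iff algebra_simps sum.distrib)

lemma trace_scaleR: "trace (k *\<^sub>R (A::real^'n^'n)) = k * trace A"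
  by (simp add: trace_def sum_distrib_left)

lemma trace_eq_sum_axis: "trace (A::real^'n^'n) = (\<Sum>i\<in>UNIV. axis i 1 \<bullet> (A *v axis i 1))"
  by (simp add: trace_def inner_axis' matrix_vector_mult_basis column_def)

lemma trace_outer: "trace ((A::real^'n^'n) ** outer u) = u \<bullet> (A *v u)"
  by (simp add: trace_def outer_def matrix_matrix_mult_def matrix_vector_mult_def inner_vec_def
      sum_distrib_left mult_ac)

lemma outer_sandwich: "outer u ** (A::real^'n^'n) ** outer u = (u \<bullet> (A *v u)) *\<^sub>R outer u"
proof -
  have "u \<bullet> (A *v u) = (\<Sum>l\<in>UNIV. \<Sum>k\<in>UNIV. u $ k * A $ k $ l * u $ l)"
    by (simp add: inner_vec_def matrix_vector_mult_def sum_distrib_left mult.assoc)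
      (rule sum.swap)
  then show ?thesis
    by (simp add: vec_eq_iff matrix_matrix_mult_def outer_def sum_distrib_left sum_distrib_right
        mult_ac)
qed

lemma psd_matrix_quadratic_eq_0_imp:
  fixes A :: "real^'n^'n"
  assumes sym: "symmetric_matrix A" and psd: "psd_matrix A" and v: "v \<bullet> (A *v v) = 0"
  shows "A *v v = 0"
proof -
  define w where "w = A *v v"
  define c where "c = w \<bullet> (A *v w)"
  have c_nonneg: "c \<ge> 0"
    using psd by (simp add: psd_matrix_def c_def)
  have quadratic: "0 \<le> 2 * t * (w \<bullet> w) + t\<^sup>2 * c" for t
  proof -
    have "0 \<le> (v + t *\<^sub>R w) \<bullet> (A *v (v + t *\<^sub>R w))"
      using psd by (simp add: psd_matrix_def)
    also have "\<dots> = 2 * t * (w \<bullet> w) + t\<^sup>2 * c"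
      using v symmetric_matrix_inner[OF sym, of v w]
      by (simp add: c_def w_def power2_eq_square algebra_simps)
    finally show ?thesis .
  qed
  define b where "b = (w \<bullet> w) / (c + 1)"
  have ww: "w \<bullet> w = b * (c + 1)"
    using c_nonneg by (simp add: b_def)
  from quadratic[of "- b"] have "0 \<le> b\<^sup>2 * (- c - 2)"
    by (simp add: ww power2_eq_square algebra_simps)
  then have "b = 0"
    using c_nonneg by (simp add: zero_le_mult_iff)
  then have "w \<bullet> w \<le> 0"
    by (simp add: ww)
  then show ?thesis
    by (metis inner_eq_zero_iff inner_ge_zero order_antisym w_def)
qed

lemma matrix_inv_right:
  fixes A :: "real^'n^'n"
  assumes "det A \<noteq> 0"
  shows "A ** matrix_inv A = mat 1"
  using someI_ex[of "\<lambda>A'. A ** A' = mat 1 \<and> A' ** A = mat 1"] assms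
  by (auto simp: matrix_inv_def invertible_det_nz[symmetric] invertible_def)

lemma matrix_inv_left:
  fixes A :: "real^'n^'n"
  assumes "det A \<noteq> 0"
  shows "matrix_inv A ** A = mat 1"
  using matrix_inv_right[OF assms] matrix_left_right_inverse by blast

lemma matrix_inv_unique:
  fixes A B :: "real^'n^'n"
  assumes "A ** B = mat 1"
  shows "matrix_inv A = B"
proof -
  have "det A \<noteq> 0"
    using assms invertible_det_nz invertible_right_inverse by blast
  have "matrix_inv A = matrix_inv A ** (A ** B)"
    by (simp add: assms)
  also have "\<dots> = (matrix_inv A ** A) ** B"
    by (simp add: matrix_mul_assoc)
  also have "\<dots> = B"
    by (simp add: matrix_inv_left \<open>det A \<noteq> 0\<close>)
  finally show ?thesis .
qed

lemma symmetric_matrix_inv: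
  fixes A :: "real^'n^'n"
  assumes sym: "symmetric_matrix A" and det: "det A \<noteq> 0"
  shows "symmetric_matrix (matrix_inv A)"
proof -
  have "A ** Finite_Cartesian_Product.transpose (matrix_inv A) = mat 1"
    using sym matrix_inv_left[OF det] unfolding symmetric_matrix_def
    by (metis matrix_transpose_mul transpose_mat)
  then show ?thesis
    unfolding symmetric_matrix_def by (metis matrix_inv_unique)
qed

lemma psd_matrix_inv:
  fixes A :: "real^'n^'n"
  assumes psd: "psd_matrix A" and det: "det A \<noteq> 0"
  shows "psd_matrix (matrix_inv A)"
  unfolding psd_matrix_def
proof
  fix v :: "real^'n"
  define w where "w = matrix_inv A *v v"
  have "A *v w = v"
    by (simp add: w_def matrix_vector_mul_assoc matrix_inv_right[OF det])
  then have "v \<bullet> (matrix_inv A *v v) = w \<bullet> (A *v w)"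
    by (simp add: w_def inner_commute)
  then show "0 \<le> v \<bullet> (matrix_inv A *v v)"
    using psd by (simp add: psd_matrix_def)
qed

(* The i-th diagonal entry of A^-1 is w \<bullet> A w for the nonzero vector w = A^-1 e_i. *)
lemma trace_matrix_inv_pos:
  fixes A :: "real^'n^'n"
  assumes sym: "symmetric_matrix A" and psd: "psd_matrix A" and det: "det A \<noteq> 0"
  shows "trace (matrix_inv A) > 0"
  unfolding trace_eq_sum_axis
proof (rule sum_pos)
  fix i :: 'n
  define w where "w = matrix_inv A *v axis i 1"
  have Aw: "A *v w = axis i 1"
    by (simp add: w_def matrix_vector_mul_assoc matrix_inv_right[OF det])
  then have diag: "axis i 1 \<bullet> (matrix_inv A *v axis i 1) = w \<bullet> (A *v w)"
    by (simp add: w_def inner_commute)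
  have "w \<bullet> (A *v w) \<noteq> 0"
    using psd_matrix_quadratic_eq_0_imp[OF sym psd] Aw by (metis axis_eq_0_iff one_neq_zero)
  moreover have "w \<bullet> (A *v w) \<ge> 0"
    using psd by (simp add: psd_matrix_def)
  ultimately show "axis i 1 \<bullet> (matrix_inv A *v axis i 1) > 0"
    by (simp add: diag)
qed simp_all

lemma trace_sandwich_nonneg:
  fixes M B :: "real^'n^'n"
  assumes "symmetric_matrix M" and "psd_matrix B"
  shows "trace (M ** B ** M) \<ge> 0"
proof -
  have "axis i 1 \<bullet> ((M ** B ** M) *v axis i 1) = (M *v axis i 1) \<bullet> (B *v (M *v axis i 1))" for i
    using symmetric_matrix_inner[OF assms(1)]
    by (metis inner_commute matrix_vector_mul_assoc)
  then show ?thesis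
    unfolding trace_eq_sum_axis using assms(2) by (simp add: psd_matrix_def sum_nonneg)
qed

(* Expand 0 <= tr((A^-1 - B^-1) B (A^-1 - B^-1)). *)
lemma trace_matrix_inv_lower_bound:
  fixes A B :: "real^'n^'n"
  assumes symA: "symmetric_matrix A" and detA: "det A \<noteq> 0"
    and symB: "symmetric_matrix B" and psdB: "psd_matrix B" and detB: "det B \<noteq> 0"
  shows "trace (matrix_inv B) \<ge>
    2 * trace (matrix_inv A) - trace (matrix_inv A ** matrix_inv A ** B)"
proof -
  define P where "P = matrix_inv A"
  define Q where "Q = matrix_inv B"
  have "symmetric_matrix (P - Q)"
    using symmetric_matrix_inv[OF symA detA] symmetric_matrix_inv[OF symB detB]
    unfolding symmetric_matrix_def P_def Q_def by (simp add: transpose_def vec_eq_iff)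
  then have "0 \<le> trace ((P - Q) ** B ** (P - Q))"
    using psdB by (rule trace_sandwich_nonneg)
  also have "(P - Q) ** B ** (P - Q) = P ** B ** P - P - P + Q"
    using matrix_inv_left[OF detB] matrix_inv_right[OF detB]
    by (simp add: matrix_diff_ldistrib matrix_diff_rdistrib matrix_mul_assoc Q_def
        flip: matrix_mul_assoc)
  also have "trace \<dots> = trace (P ** B ** P) - 2 * trace P + trace Q"
    by (simp only: trace_add trace_sub)
  also have "trace (P ** B ** P) = trace (P ** P ** B)"
    by (metis matrix_mul_assoc trace_mul_sym)
  finally show ?thesis
    by (simp add: P_def Q_def)
qed

lemma Sherman_Morrison:
  fixes A :: "real^'n^'n"
  defines "P \<equiv> matrix_inv A"
  assumes det: "det A \<noteq> 0" and denom: "1 + k * (u \<bullet> (P *v u)) \<noteq> 0"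
  shows "(A + k *\<^sub>R outer u) **
    (P - (k / (1 + k * (u \<bullet> (P *v u)))) *\<^sub>R (P ** outer u ** P)) = mat 1"
proof -
  define m where "m = u \<bullet> (P *v u)"
  define r where "r = k / (1 + k * m)"
  have AP: "A ** P = mat 1"
    using matrix_inv_right[OF det] by (simp add: P_def)
  have "(A + k *\<^sub>R outer u) ** (P - r *\<^sub>R (P ** outer u ** P))
      = A ** P - r *\<^sub>R (A ** P ** outer u ** P) + k *\<^sub>R (outer u ** P)
        - (k * r) *\<^sub>R (outer u ** P ** outer u ** P)"
    by (simp add: matrix_add_rdistrib matrix_diff_ldistrib matrix_scalar_ac matrix_mul_assoc
        algebra_simps flip: scalar_matrix_assoc)
  also have "outer u ** P ** outer u ** P = m *\<^sub>R (outer u ** P)"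
    using outer_sandwich[of u P] by (simp add: m_def flip: scalar_matrix_assoc)
  also have "A ** P ** outer u ** P = outer u ** P"
    using AP by simp
  finally have "(A + k *\<^sub>R outer u) ** (P - r *\<^sub>R (P ** outer u ** P))
      = mat 1 + (k - r - k * r * m) *\<^sub>R (outer u ** P)"
    using AP by (simp add: algebra_simps)
  also have "k - r - k * r * m = 0"
    using denom by (simp add: r_def m_def field_simps)
  finally show ?thesis
    by (simp add: r_def m_def)
qed

lemma trace_matrix_inv_mixture_less:
  fixes A :: "real^'n^'n"
  defines "P \<equiv> matrix_inv A"
  assumes psd: "psd_matrix A" and det: "det A \<noteq> 0" and c: "c \<ge> 0"
    and \<alpha>: "0 < \<alpha>" "\<alpha> < 1"
    and less: "trace P * (1 - \<alpha> + \<alpha> * c * (u \<bullet> (P *v u))) < c * (u \<bullet> ((P ** P) *v u))"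
  shows "trace (matrix_inv ((1 - \<alpha>) *\<^sub>R A + \<alpha> *\<^sub>R (c *\<^sub>R outer u))) < trace P"
proof -
  define m where "m = u \<bullet> (P *v u)"
  define s where "s = u \<bullet> ((P ** P) *v u)"
  define k where "k = \<alpha> * c / (1 - \<alpha>)"
  define r where "r = k / (1 + k * m)"
  have "m \<ge> 0"
    using psd_matrix_inv[OF psd det] by (simp add: psd_matrix_def m_def P_def)
  then have "\<alpha> * c * m \<ge> 0"
    using \<alpha> c by simp
  then have denom: "(1 - \<alpha>) * (1 + k * m) = 1 - \<alpha> + \<alpha> * c * m" "1 - \<alpha> + \<alpha> * c * m > 0"
    using \<alpha> by (simp_all add: k_def field_simps)
  have mixture: "(1 - \<alpha>) *\<^sub>R A + \<alpha> *\<^sub>R (c *\<^sub>R outer u) = (1 - \<alpha>) *\<^sub>R (A + k *\<^sub>R outer u)"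
    using \<alpha> by (simp add: k_def scaleR_add_right)
  have "matrix_inv ((1 - \<alpha>) *\<^sub>R A + \<alpha> *\<^sub>R (c *\<^sub>R outer u)) =
      (1 / (1 - \<alpha>)) *\<^sub>R (P - r *\<^sub>R (P ** outer u ** P))"
    unfolding mixture
  proof (rule matrix_inv_unique)
    have "1 + k * m \<noteq> 0"
      using denom \<alpha> by auto
    then show "(1 - \<alpha>) *\<^sub>R (A + k *\<^sub>R outer u) **
        ((1 / (1 - \<alpha>)) *\<^sub>R (P - r *\<^sub>R (P ** outer u ** P))) = mat 1"
      using Sherman_Morrison[OF det, of k u] \<alpha>
      by (simp add: r_def m_def P_def matrix_scalar_ac flip: scalar_matrix_assoc)
  qed
  moreover have "trace (P ** outer u ** P) = s"
    by (metis matrix_mul_assoc s_def trace_mul_sym trace_outer)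
  ultimately have "trace (matrix_inv ((1 - \<alpha>) *\<^sub>R A + \<alpha> *\<^sub>R (c *\<^sub>R outer u))) =
      (trace P - r * s) / (1 - \<alpha>)"
    by (simp add: trace_scaleR trace_sub)
  also have "\<dots> < trace P"
  proof -
    have "\<alpha> * trace P * (1 - \<alpha> + \<alpha> * c * m) < \<alpha> * (c * s)"
      using less \<alpha> by (simp add: m_def s_def mult.assoc)
    then have "\<alpha> * trace P < r * s"
      using denom by (simp add: r_def k_def field_simps)
    then show ?thesis
      using \<alpha> by (simp add: field_simps)
  qed
  finally show ?thesis .
qed

lemma eventually_trace_matrix_inv_mixture_less:
  fixes A :: "real^'n^'n"
  defines "P \<equiv> matrix_inv A"
  assumes psd: "psd_matrix A" and det: "det A \<noteq> 0" and c: "c \<ge> 0"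
    and less: "trace P < c * (u \<bullet> ((P ** P) *v u))"
  shows "eventually (\<lambda>\<alpha>. trace (matrix_inv ((1 - \<alpha>) *\<^sub>R A + \<alpha> *\<^sub>R (c *\<^sub>R outer u))) < trace P)
    (at_right 0)"
proof -
  have "((\<lambda>\<alpha>. trace P * (1 - \<alpha> + \<alpha> * c * (u \<bullet> (P *v u)))) \<longlongrightarrow> trace P) (at_right 0)"
    by (auto intro!: tendsto_eq_intros)
  then have "eventually (\<lambda>\<alpha>. trace P * (1 - \<alpha> + \<alpha> * c * (u \<bullet> (P *v u))) <
      c * (u \<bullet> ((P ** P) *v u))) (at_right 0)"
    using less by (simp add: order_tendstoD(2))
  moreover have "eventually (\<lambda>\<alpha>. 0 < \<alpha> \<and> \<alpha> < 1) (at_right (0::real))"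
    by (rule eventually_at_rightI[of 0 1]) auto
  ultimately show ?thesis
  proof eventually_elim
    case (elim \<alpha>)
    then show ?case
      using trace_matrix_inv_mixture_less[OF psd det c, of \<alpha> u] unfolding P_def by blast
  qed
qed

lemma eventually_det_mixture_pos:
  fixes A B :: "real^'n^'n"
  assumes "det A > 0"
  shows "eventually (\<lambda>\<alpha>. det ((1 - \<alpha>) *\<^sub>R A + \<alpha> *\<^sub>R B) > 0) (at_right 0)"
proof -
  have det: "continuous_on UNIV (det :: real^'n^'n \<Rightarrow> real)"
    unfolding det_def[abs_def] by (intro continuous_intros continuous_on_prod)
  have "((\<lambda>\<alpha>. (1 - \<alpha>) *\<^sub>R A + \<alpha> *\<^sub>R B) \<longlongrightarrow> (1 - 0) *\<^sub>R A + 0 *\<^sub>R B) (at_right 0)"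
    by (intro tendsto_intros)
  then have "((\<lambda>\<alpha>. det ((1 - \<alpha>) *\<^sub>R A + \<alpha> *\<^sub>R B)) \<longlongrightarrow> det A) (at_right 0)"
    by (intro continuous_on_tendsto_compose[OF det]) auto
  then show ?thesis
    using assms by (rule order_tendstoD(1))
qed

section \<open>Information matrices of designs\<close>

lemma space_designs: "M \<in> designs X \<Longrightarrow> space M = X"
  unfolding designs_def
  by (metis (mono_tags, lifting) mem_Collect_eq sets_eq_imp_space_eq space_restrict_space
      space_borel inf_top.right_neutral)

lemma sets_designs_iff:
  assumes "M \<in> designs X" and "X \<in> sets borel"
  shows "A \<in> sets M \<longleftrightarrow> A \<subseteq> X \<and> A \<in> sets borel"
  using assms sets_restrict_space_iff[of X borel A] by (auto simp: designs_def)

lemma integrable_Fx_if_det_FI_nonzero: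
  assumes "det (FI nu q beta M) \<noteq> 0"
  shows "integrable M (Fx nu q beta)"
proof (rule ccontr)
  assume "\<not> integrable M (Fx nu q beta)"
  then have "FI nu q beta M = 0"
    by (simp add: FI_def not_integrable_integral_eq)
  with assms show False
    by (simp add: det_def power_0_left)
qed

lemma linear_functional_FI:
  fixes L :: "real^'p^'p \<Rightarrow> real"
  assumes "linear L" and "integrable M (Fx nu q beta)"
  shows "L (FI nu q beta M) = (\<integral>x. L (Fx nu q beta x) \<partial>M)"
    and "integrable M (\<lambda>x. L (Fx nu q beta x))"
  using assms
  by (simp_all add: FI_def integral_bounded_linear integrable_bounded_linear
      linear_conv_bounded_linear)

lemma symmetric_matrix_FI:
  assumes "integrable M (Fx nu q beta)"
  shows "symmetric_matrix (FI nu q beta M)"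
proof -
  have entry: "linear (\<lambda>A :: real^'p^'p. A $ i $ j)" for i j
    by (rule linearI) simp_all
  have "FI nu q beta M $ i $ j = FI nu q beta M $ j $ i" for i j
    using linear_functional_FI(1)[OF entry assms, of i j] linear_functional_FI(1)[OF entry assms, of j i]
    by (simp add: Fx_def outer_def mult.commute)
  then show ?thesis
    by (simp add: symmetric_matrix_def transpose_def vec_eq_iff)
qed

lemma psd_matrix_FI:
  fixes q :: "real^'d \<Rightarrow> real^'p"
  assumes "\<And>t. nu t \<ge> 0" and "integrable M (Fx nu q beta)"
  shows "psd_matrix (FI nu q beta M)"
  unfolding psd_matrix_def
proof
  fix v :: "real^'p"
  have quadratic_form: "linear (\<lambda>A :: real^'p^'p. v \<bullet> (A *v v))"
    by (rule linearI) (simp_all add: matrix_vector_mult_def inner_vec_def vec_eq_iff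
        algebra_simps sum.distrib sum_distrib_left)
  have "v \<bullet> (Fx nu q beta x *v v) = nu (q x \<bullet> beta) * (q x \<bullet> v)\<^sup>2" for x
    by (simp add: Fx_def outer_def matrix_vector_mult_def inner_vec_def power2_eq_square
        sum_distrib_left sum_distrib_right algebra_simps)
  then show "0 \<le> v \<bullet> (FI nu q beta M *v v)"
    using assms by (simp add: linear_functional_FI[OF quadratic_form assms(2)])
qed

lemma trace_matrix_inv_FI_pos:
  assumes "\<And>t. nu t \<ge> 0" and "det (FI nu q beta M) \<noteq> 0"
  shows "trace (matrix_inv (FI nu q beta M)) > 0"
  using assms integrable_Fx_if_det_FI_nonzero
  by (blast intro: trace_matrix_inv_pos symmetric_matrix_FI psd_matrix_FI)

lemma trace_FI_eq_integral_sens: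
  fixes nu :: "real \<Rightarrow> real" and q :: "real^'d \<Rightarrow> real^'p" and beta :: "real^'p"
    and xi M :: "(real^'d) measure"
  defines "P \<equiv> matrix_inv (FI nu q beta xi)"
  assumes "integrable M (Fx nu q beta)"
  shows "trace (P ** P ** FI nu q beta M) = (\<integral>x. sens nu q beta x xi \<partial>M)"
    and "integrable M (\<lambda>x. sens nu q beta x xi)"
proof -
  have linear_trace: "linear (\<lambda>A. trace (P ** P ** A))"
    by (rule linearI) (simp_all add: matrix_add_ldistrib matrix_scalar_ac trace_add trace_scaleR
        flip: scalar_matrix_assoc)
  have trace_Fx: "trace (P ** P ** Fx nu q beta x) = sens nu q beta x xi" for x
    by (simp add: Fx_def sens_def P_def matrix_scalar_ac trace_scaleR trace_outer inner_commute
        flip: scalar_matrix_assoc)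
  show "trace (P ** P ** FI nu q beta M) = (\<integral>x. sens nu q beta x xi \<partial>M)"
    by (simp add: linear_functional_FI(1)[OF linear_trace assms(2)] trace_Fx)
  show "integrable M (\<lambda>x. sens nu q beta x xi)"
    using linear_functional_FI(2)[OF linear_trace assms(2)] by (simp add: trace_Fx)
qed

lemma Diff_finite_in_sets_designs:
  assumes "M \<in> designs X" and "X \<in> sets borel" and "finite S"
  shows "X - S \<in> sets M"
  using assms by (simp add: sets_designs_iff Diff_eq finite_imp_closed borel_closed open_Compl
      borel_open)

lemma integral_finsupp_design:
  fixes f :: "real^'d \<Rightarrow> 'b::{banach, second_countable_topology}"
  assumes M: "M \<in> designs X" and X: "X \<in> sets borel"
    and S: "finite S" "S \<subseteq> X" and null: "emeasure M (X - S) = 0"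
    and f: "f \<in> borel_measurable M"
  shows "(\<integral>x. f x \<partial>M) = (\<Sum>s\<in>S. measure M {s} *\<^sub>R f s)"
proof -
  have finite_M: "finite_measure M"
    using M by (simp add: designs_def prob_space_def)
  have singletons: "{s} \<in> sets M" if "s \<in> S" for s
    using S that by (auto simp: sets_designs_iff[OF M X])
  have at_support: "(\<Sum>s\<in>S. indicator {s} x *\<^sub>R f s) = f x" if "x \<in> S" for x
  proof -
    have "(\<Sum>s\<in>S. indicator {s} x *\<^sub>R f s) = (\<Sum>s\<in>S. if s = x then f s else 0)"
      by (rule sum.cong) (auto simp: indicator_def)
    then show ?thesis
      using that S by simp
  qed
  have "AE x in M. f x = (\<Sum>s\<in>S. indicator {s} x *\<^sub>R f s)"
  proof (rule AE_I')
    show "X - S \<in> null_sets M"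
      using null Diff_finite_in_sets_designs[OF M X S(1)] by (simp add: null_sets_def)
    show "{x \<in> space M. f x \<noteq> (\<Sum>s\<in>S. indicator {s} x *\<^sub>R f s)} \<subseteq> X - S"
      using at_support space_designs[OF M] by force
  qed
  then have "(\<integral>x. f x \<partial>M) = (\<integral>x. (\<Sum>s\<in>S. indicator {s} x *\<^sub>R f s) \<partial>M)"
    using f singletons by (intro integral_cong_AE) auto
  also have "\<dots> = (\<Sum>s\<in>S. (\<integral>x. indicator {s} x *\<^sub>R f s \<partial>M))"
    using singletons finite_M
    by (intro Bochner_Integration.integral_sum)
       (auto simp: finite_measure.emeasure_finite less_top[symmetric]
          intro!: integrable_scaleR_left integrable_real_indicator)
  also have "\<dots> = (\<Sum>s\<in>S. measure M {s} *\<^sub>R f s)"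
    using singletons finite_M
    by (intro sum.cong) (auto simp: finite_measure.emeasure_finite less_top[symmetric])
  finally show ?thesis .
qed

lemma sum_measure_finsupp_design:
  assumes M: "M \<in> designs X" and X: "X \<in> sets borel"
    and S: "finite S" "S \<subseteq> X" and null: "emeasure M (X - S) = 0"
  shows "(\<Sum>s\<in>S. measure M {s}) = 1"
proof -
  have "(\<Sum>s\<in>S. measure M {s}) = (\<integral>x. 1 \<partial>M)"
    using integral_finsupp_design[OF M X S null, of "\<lambda>_. 1 :: real"] by simp
  also have "\<dots> = 1"
    using M by (simp add: designs_def prob_space.prob_space)
  finally show ?thesis .
qed

definition discrete_design ::
  "(real^'d) set \<Rightarrow> (real^'d) set \<Rightarrow> (real^'d \<Rightarrow> real) \<Rightarrow> (real^'d) measure" where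
  "discrete_design X S w = distr (point_measure S (\<lambda>s. ennreal (w s))) (restrict_space borel X) id"

lemma measurable_id_point_measure:
  "S \<subseteq> X \<Longrightarrow> id \<in> point_measure S w \<rightarrow>\<^sub>M restrict_space borel X"
  by (subst measurable_cong_sets[OF sets_point_measure_count_space refl])
     (auto simp: measurable_count_space_eq1 space_restrict_space)

lemma discrete_design_in_designs:
  assumes S: "finite S" "S \<subseteq> X" and w: "\<And>s. s \<in> S \<Longrightarrow> w s \<ge> 0" and total: "(\<Sum>s\<in>S. w s) = 1"
  shows "discrete_design X S w \<in> designs X"
  unfolding designs_def
proof (intro CollectI conjI)
  show "sets (discrete_design X S w) = sets (restrict_space borel X)"
    by (simp add: discrete_design_def)
  have "X \<in> sets (restrict_space borel X)"
    using sets.top[of "restrict_space borel X"] by (simp add: space_restrict_space)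
  then have "emeasure (discrete_design X S w) X = emeasure (point_measure S (\<lambda>s. ennreal (w s))) S"
    using S unfolding discrete_design_def
    by (subst emeasure_distr[OF measurable_id_point_measure])
       (auto simp: space_point_measure Int_absorb1)
  also have "\<dots> = 1"
    using S w total by (simp add: emeasure_point_measure_finite sum_ennreal)
  finally show "prob_space (discrete_design X S w)"
    by (intro prob_spaceI) (simp add: discrete_design_def space_restrict_space)
qed

lemma integral_discrete_design:
  fixes f :: "real^'d \<Rightarrow> 'b::{banach, second_countable_topology}"
  assumes S: "finite S" "S \<subseteq> X" and w: "\<And>s. s \<in> S \<Longrightarrow> w s \<ge> 0"
    and f: "f \<in> borel_measurable (restrict_space borel X)"
  shows "(\<integral>x. f x \<partial>discrete_design X S w) = (\<Sum>s\<in>S. w s *\<^sub>R f s)"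
  using S w unfolding discrete_design_def
  by (simp add: integral_distr[OF measurable_id_point_measure[OF S(2)] f]
      lebesgue_integral_point_measure_finite)

lemma finsupp_design_mixture:
  assumes xi: "finsupp_design X xi" and X: "X \<in> sets borel" and x0: "x0 \<in> X"
    and \<alpha>: "0 \<le> \<alpha>" "\<alpha> \<le> 1" and integrable: "integrable xi (Fx nu q beta)"
  shows "\<exists>M\<in>designs X. FI nu q beta M = (1 - \<alpha>) *\<^sub>R FI nu q beta xi + \<alpha> *\<^sub>R Fx nu q beta x0"
proof -
  have xi_design: "xi \<in> designs X"
    using xi by (simp add: finsupp_design_def)
  obtain S0 where S0: "finite S0" "S0 \<subseteq> X" and null0: "emeasure xi (X - S0) = 0"
    using xi by (auto simp: finsupp_design_def)
  (* On the enlarged support S both xi and the mixture are weighted sums over the same points. *)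
  define S where "S = insert x0 S0"
  have S: "finite S" "S \<subseteq> X" "x0 \<in> S"
    using S0 x0 by (auto simp: S_def)
  have null: "emeasure xi (X - S) = 0"
    using null0 emeasure_mono[of "X - S" "X - S0" xi]
      Diff_finite_in_sets_designs[OF xi_design X S0(1)]
    by (auto simp: S_def)
  have measurable: "Fx nu q beta \<in> borel_measurable (restrict_space borel X)"
    using borel_measurable_integrable[OF integrable] xi_design
    by (simp add: designs_def cong: measurable_cong_sets)
  have FI_xi: "FI nu q beta xi = (\<Sum>s\<in>S. measure xi {s} *\<^sub>R Fx nu q beta s)"
    unfolding FI_def
    by (rule integral_finsupp_design[OF xi_design X S(1,2) null
          borel_measurable_integrable[OF integrable]])
  define w where "w s = (1 - \<alpha>) * measure xi {s} + (if s = x0 then \<alpha> else 0)" for s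
  have w_nonneg: "w s \<ge> 0" for s
    using \<alpha> by (simp add: w_def)
  have point_mass: "(\<Sum>s\<in>S. (if s = x0 then \<alpha> else 0) *\<^sub>R Fx nu q beta s) = \<alpha> *\<^sub>R Fx nu q beta x0"
  proof -
    have "(\<Sum>s\<in>S. (if s = x0 then \<alpha> else 0) *\<^sub>R Fx nu q beta s)
        = (\<Sum>s\<in>S. if s = x0 then \<alpha> *\<^sub>R Fx nu q beta s else 0)"
      by (rule sum.cong) auto
    then show ?thesis
      using S by simp
  qed
  have "(\<Sum>s\<in>S. w s) = 1"
    using S sum_measure_finsupp_design[OF xi_design X S(1,2) null]
    by (simp add: w_def sum.distrib flip: sum_distrib_left)
  then have "discrete_design X S w \<in> designs X"
    using S w_nonneg by (intro discrete_design_in_designs)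
  moreover have "FI nu q beta (discrete_design X S w) =
      (1 - \<alpha>) *\<^sub>R FI nu q beta xi + \<alpha> *\<^sub>R Fx nu q beta x0"
    using S w_nonneg
    by (simp add: FI_def integral_discrete_design[OF S(1,2) _ measurable] FI_xi[unfolded FI_def]
        w_def scaleR_add_left sum.distrib scaleR_sum_right point_mass)
  ultimately show ?thesis
    by blast
qed

section \<open>The equivalence theorem\<close>

lemma A_optimal_if_sens_le_trace:
  assumes nu_nonneg: "\<And>t. nu t \<ge> 0" and xi: "xi \<in> designs X"
    and det_xi: "det (FI nu q beta xi) > 0"
    and sens_le: "\<And>x. x \<in> X \<Longrightarrow> sens nu q beta x xi \<le> trace (matrix_inv (FI nu q beta xi))"
  shows "A_optimal X nu q beta xi"
  unfolding A_optimal_def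
proof (intro conjI ballI xi)
  fix N
  assume N: "N \<in> designs X"
  define A where "A = FI nu q beta xi"
  define B where "B = FI nu q beta N"
  define T where "T = trace (matrix_inv A)"
  have T_pos: "T > 0"
    using trace_matrix_inv_FI_pos[of nu q beta xi] nu_nonneg det_xi by (simp add: T_def A_def)
  have h_xi: "hA nu q beta xi = 1 / T"
    using det_xi by (simp add: hA_def T_def A_def)
  show "hA nu q beta N \<le> hA nu q beta xi"
  proof (cases "det B > 0")
    case False
    then show ?thesis
      using h_xi T_pos by (simp add: hA_def B_def)
  next
    case True
    have integrable_A: "integrable xi (Fx nu q beta)"
      using det_xi by (intro integrable_Fx_if_det_FI_nonzero) simp
    have integrable_B: "integrable N (Fx nu q beta)"
      using True by (intro integrable_Fx_if_det_FI_nonzero) (simp add: B_def)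
    have "trace (matrix_inv A ** matrix_inv A ** B) = (\<integral>x. sens nu q beta x xi \<partial>N)"
      using trace_FI_eq_integral_sens(1)[OF integrable_B] by (simp add: A_def B_def)
    also have "\<dots> \<le> (\<integral>x. T \<partial>N)"
      using trace_FI_eq_integral_sens(2)[OF integrable_B] N sens_le
      by (intro integral_mono)
         (auto simp: space_designs T_def A_def designs_def prob_space_def
            finite_measure.integrable_const)
    also have "\<dots> = T"
      using N by (simp add: designs_def prob_space.prob_space)
    finally have "trace (matrix_inv B) \<ge> T"
      using trace_matrix_inv_lower_bound[of A B] symmetric_matrix_FI psd_matrix_FI[OF nu_nonneg]
        integrable_A integrable_B det_xi True
      by (fastforce simp: T_def A_def B_def)
    then show ?thesis
      using True h_xi T_pos by (simp add: hA_def B_def frac_le)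
  qed
qed

lemma sens_le_trace_if_A_optimal:
  fixes q :: "real^'d \<Rightarrow> real^'p"
  assumes nu_nonneg: "\<And>t. nu t \<ge> 0" and X: "X \<in> sets borel"
    and xi: "finsupp_design X xi" and det_xi: "det (FI nu q beta xi) > 0"
    and optimal: "A_optimal X nu q beta xi" and x0: "x0 \<in> X"
  shows "sens nu q beta x0 xi \<le> trace (matrix_inv (FI nu q beta xi))"
proof (rule ccontr)
  define A where "A = FI nu q beta xi"
  define T where "T = trace (matrix_inv A)"
  define F where "F \<alpha> = (1 - \<alpha>) *\<^sub>R A + \<alpha> *\<^sub>R Fx nu q beta x0" for \<alpha> :: real
  have integrable: "integrable xi (Fx nu q beta)"
    using det_xi by (intro integrable_Fx_if_det_FI_nonzero) simp
  assume "\<not> ?thesis"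
  then have "T < nu (q x0 \<bullet> beta) * (q x0 \<bullet> ((matrix_inv A ** matrix_inv A) *v q x0))"
    by (simp add: sens_def T_def A_def inner_commute)
  then have trace_less: "eventually (\<lambda>\<alpha>. trace (matrix_inv (F \<alpha>)) < T) (at_right 0)"
    using eventually_trace_matrix_inv_mixture_less[OF psd_matrix_FI[OF nu_nonneg integrable]]
      det_xi nu_nonneg
    by (simp add: F_def Fx_def A_def T_def)
  have det_pos: "eventually (\<lambda>\<alpha>. det (F \<alpha>) > 0) (at_right 0)"
    unfolding F_def A_def using det_xi by (rule eventually_det_mixture_pos)
  have unit_interval: "eventually (\<lambda>\<alpha>. 0 < \<alpha> \<and> \<alpha> < 1) (at_right (0::real))"
    by (rule eventually_at_rightI[of 0 1]) auto
  obtain \<alpha> where \<alpha>: "0 < \<alpha>" "\<alpha> < 1"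
    and det_F: "det (F \<alpha>) > 0" and trace_F: "trace (matrix_inv (F \<alpha>)) < T"
    using eventually_happens'[OF trivial_limit_at_right_real
        eventually_conj[OF unit_interval eventually_conj[OF det_pos trace_less]]]
    by blast
  obtain M where M: "M \<in> designs X" and FI_M: "FI nu q beta M = F \<alpha>"
    using finsupp_design_mixture[OF xi X x0 _ _ integrable, of \<alpha>] \<alpha> by (auto simp: F_def A_def)
  have "trace (matrix_inv (F \<alpha>)) > 0"
    using trace_matrix_inv_FI_pos[of nu q beta M] nu_nonneg det_F FI_M by simp
  then have "hA nu q beta xi < hA nu q beta M"
    using trace_F det_xi det_F FI_M by (simp add: hA_def T_def A_def frac_less2)
  then show False
    using optimal M by (auto simp: A_optimal_def not_le[symmetric])
qed

lemma continuous_on_sens: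
  assumes nu: "continuous_on UNIV nu" and q: "\<And>i. continuous_on S (\<lambda>x. q x $ i)"
  shows "continuous_on S (\<lambda>x. sens nu q beta x M)"
proof -
  have q_vec: "continuous_on S q"
    using continuous_on_vec_lambda[of S "\<lambda>i x. q x $ i"] q by simp
  have "continuous_on S (\<lambda>x. nu (beta \<bullet> q x))"
    by (rule continuous_on_compose2[OF nu]) (auto intro!: continuous_intros q_vec)
  then show ?thesis
    unfolding sens_def
    by (intro continuous_intros q_vec
        continuous_on_compose2[OF matrix_vector_mult_linear_continuous_on q_vec]) auto
qed

lemma continuous_on_disc_part: "continuous_on UNIV (disc_part (C :: 'd::finite set))"
proof -
  have "continuous_on UNIV (\<lambda>x :: real^'d. if j \<in> C then 0 else x $ j)" for j
    by (cases "j \<in> C") (simp_all add: continuous_on_component)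
  then show ?thesis
    unfolding disc_part_def by (intro continuous_on_vec_lambda)
qed

lemma finite_disc_part_design_space:
  assumes "valid_discrete C I D"
  shows "finite (disc_part C ` design_space C l r D)"
proof (rule finite_subset)
  let ?levels = "PiE UNIV (\<lambda>j. if j \<in> C then {0} else I j)"
  show "finite ((\<lambda>f. \<chi> j. f j) ` ?levels)"
    using assms by (intro finite_imageI finite_PiE) (auto simp: valid_discrete_def)
  show "disc_part C ` design_space C l r D \<subseteq> (\<lambda>f. \<chi> j. f j) ` ?levels"
  proof
    fix y
    assume "y \<in> disc_part C ` design_space C l r D"
    then obtain x where x: "x \<in> design_space C l r D" and y: "y = disc_part C x"
      by blast
    have "y $ j \<in> (if j \<in> C then {0} else I j)" for j
    proof (cases "j \<in> C")
      case True
      then show ?thesis by (simp add: y disc_part_def)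
    next
      case False
      then have "C \<noteq> UNIV"
        by auto
      then have "y \<in> D"
        using x y by (simp add: design_space_def)
      then show ?thesis
        using assms False by (auto simp: valid_discrete_def)
    qed
    then have "(\<lambda>j. y $ j) \<in> ?levels"
      by auto
    then show "y \<in> (\<lambda>f. \<chi> j. f j) ` ?levels"
      by (metis (no_types, lifting) image_eqI vec_nth_inverse)
  qed
qed

lemma compact_attains_max_on_finitely_many_slices:
  fixes f :: "'a::topological_space \<Rightarrow> real" and g :: "'a \<Rightarrow> 'b::t1_space"
  assumes X: "compact X" "X \<noteq> {}" and g: "continuous_on UNIV g" "finite (g ` X)"
    and f: "\<And>x0. x0 \<in> X \<Longrightarrow> continuous_on {x \<in> X. g x = g x0} f"
  shows "\<exists>x0\<in>X. \<forall>x\<in>X. f x \<le> f x0"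
proof -
  have "compact {x \<in> X. g x = d}" for d
  proof -
    have "{x \<in> X. g x = d} = X \<inter> g -` {d}"
      by auto
    then show ?thesis
      using compact_Int_closed[OF X(1) closed_vimage[OF closed_singleton g(1)]] by simp
  qed
  then have "compact (\<Union>d\<in>g ` X. f ` {x \<in> X. g x = d})"
    using f by (intro compact_UN g(2)) (auto intro!: compact_continuous_image)
  moreover have "(\<Union>d\<in>g ` X. f ` {x \<in> X. g x = d}) = f ` X"
    by auto
  ultimately obtain y where "y \<in> f ` X" "\<forall>z\<in>f ` X. z \<le> y"
    using compact_attains_sup[of "f ` X"] X(2) by auto
  then show ?thesis
    by auto
qed

theorem corollary4:
  fixes C :: "'d::finite set" and l r :: "'d \<Rightarrow> real" and I :: "'d \<Rightarrow> real set"
    and D :: "(real^'d) set" and X :: "(real^'d) set"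
    and nu :: "real \<Rightarrow> real" and q :: "real^'d \<Rightarrow> real^'p::finite" and beta :: "real^'p"
    and xi :: "(real^'d) measure"
  assumes C_ne: "C \<noteq> {}"
    and disc: "valid_discrete C I D"
    and X_def: "X = design_space C l r D"
    and X_compact: "compact X"
    and nu_cont: "continuous_on UNIV nu"
    and nu_nonneg: "\<And>t. nu t \<ge> 0"
    and q_cont: "\<And>i x0. x0 \<in> X \<Longrightarrow>
        continuous_on {x \<in> X. disc_part C x = disc_part C x0} (\<lambda>x. q x $ i)"
    and exists_nonsing: "\<exists>M\<in>designs X. det (FI nu q beta M) > 0"
    and xi_fin: "finsupp_design X xi"
    and xi_nonsing: "det (FI nu q beta xi) > 0"
  shows "forlion_reports X nu q beta xi \<longleftrightarrow> A_optimal X nu q beta xi"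
proof -
  have xi_design: "xi \<in> designs X"
    using xi_fin by (simp add: finsupp_design_def)
  then have "X \<noteq> {}"
    using prob_space.not_empty space_designs by (fastforce simp: designs_def)
  moreover have "finite (disc_part C ` X)"
    using finite_disc_part_design_space[OF disc] by (simp add: X_def)
  moreover have "continuous_on {x \<in> X. disc_part C x = disc_part C x0} (\<lambda>x. sens nu q beta x xi)"
    if "x0 \<in> X" for x0
    using continuous_on_sens[OF nu_cont q_cont[OF that]] .
  ultimately obtain xs where xs: "xs \<in> X" "\<forall>x\<in>X. sens nu q beta x xi \<le> sens nu q beta xs xi"
    using compact_attains_max_on_finitely_many_slices[OF X_compact _ continuous_on_disc_part]
    by blast
  show ?thesis
  proof
    assume "forlion_reports X nu q beta xi"
    then show "A_optimal X nu q beta xi"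
      unfolding forlion_reports_def
      by (meson A_optimal_if_sens_le_trace[OF nu_nonneg xi_design xi_nonsing] order_trans)
  next
    assume "A_optimal X nu q beta xi"
    then show "forlion_reports X nu q beta xi"
      unfolding forlion_reports_def
      using xs X_compact sens_le_trace_if_A_optimal[OF nu_nonneg _ xi_fin xi_nonsing]
      by (meson borel_closed compact_imp_closed)
  qed
qed

end
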